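(* Let $H$ be a $(B,C)$-graph and let $\mu(H)$ denote the number of minor faces of $H$. Then $\mu(H) \geq |V(H)| - |V(C)| + 2$ (equivalently, $\mu(H)\ge |B|+2$).
   Context: Let $C$ be a cycle and $B$ a finite set disjoint from $V(C)$. A plane graph $H$ (i.e. a planar graph together with a fixed embedding in the plane) is called a $(B,C)$-graph if $V(H)=B\cup V(C)$, $C$ is a subgraph of $H$ that is an induced subgraph of $H$, the set $B$ is independent in $H$, and every vertex of $B$ has degree exactly $3$ in $H$. The vertices of $B$ are called outer vertices. A face of $H$ is called minor if it is incident with at most one outer vertex, and major otherwise. *)

theory Defs
  imports Main
begin

text \<open>Combinatorial model of plane graphs via rotation systems (combinatorial maps).
A simple graph is a vertex set V and a symmetric irreflexive set E of ordered pairs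
(darts); each undirected edge {u,v} corresponds to the two darts (u,v),(v,u).
An embedding is a rotation rot: a permutation of the darts that cyclically permutes
the darts leaving each vertex. The embedding is plane iff the graph is connected and
Euler's formula |V| - |E| + |F| = 2 holds.\<close>

definition simple_graph :: "'a set \<Rightarrow> ('a \<times> 'a) set \<Rightarrow> bool" where
  "simple_graph V E \<longleftrightarrow> finite V \<and> E \<subseteq> V \<times> V \<and> sym E \<and> irrefl E"

definition rotation_system :: "('a \<times> 'a) set \<Rightarrow> ('a \<times> 'a \<Rightarrow> 'a \<times> 'a) \<Rightarrow> bool" where
  "rotation_system E rot \<longleftrightarrow>
     bij_betw rot E E \<and>
     (\<forall>d\<in>E. fst (rot d) = fst d) \<and>
     (\<forall>d\<in>E. \<forall>d'\<in>E. fst d' = fst d \<longrightarrow> (\<exists>n. (rot ^^ n) d = d'))"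

definition face_perm :: "('a \<times> 'a \<Rightarrow> 'a \<times> 'a) \<Rightarrow> 'a \<times> 'a \<Rightarrow> 'a \<times> 'a" where
  "face_perm rot d = rot (snd d, fst d)"

definition face_of :: "('a \<times> 'a \<Rightarrow> 'a \<times> 'a) \<Rightarrow> 'a \<times> 'a \<Rightarrow> ('a \<times> 'a) set" where
  "face_of rot d = {(face_perm rot ^^ n) d | n. True}"

definition faces :: "('a \<times> 'a) set \<Rightarrow> ('a \<times> 'a \<Rightarrow> 'a \<times> 'a) \<Rightarrow> ('a \<times> 'a) set set" where
  "faces E rot = face_of rot ` E"

definition connected_graph :: "'a set \<Rightarrow> ('a \<times> 'a) set \<Rightarrow> bool" where
  "connected_graph V E \<longleftrightarrow> (\<forall>u\<in>V. \<forall>v\<in>V. (u, v) \<in> E\<^sup>*)"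

text \<open>Plane graph: simple graph with a rotation system of genus 0
(Euler: |V| - |E|/2 + |F| = 2, where E counts darts, i.e. twice the edges).\<close>
definition plane_graph :: "'a set \<Rightarrow> ('a \<times> 'a) set \<Rightarrow> ('a \<times> 'a \<Rightarrow> 'a \<times> 'a) \<Rightarrow> bool" where
  "plane_graph V E rot \<longleftrightarrow> simple_graph V E \<and> rotation_system E rot \<and> connected_graph V E \<and>
     2 * (card V + card (faces E rot)) = card E + 4"

definition face_incident :: "('a \<times> 'a) set \<Rightarrow> 'a \<Rightarrow> bool" where
  "face_incident f v \<longleftrightarrow> (\<exists>d\<in>f. fst d = v)"

definition cycle_edge :: "'a list \<Rightarrow> 'a \<Rightarrow> 'a \<Rightarrow> bool" where
  "cycle_edge cs u v \<longleftrightarrow> (\<exists>i<length cs.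
      (u = cs ! i \<and> v = cs ! ((i + 1) mod length cs)) \<or>
      (v = cs ! i \<and> u = cs ! ((i + 1) mod length cs)))"

definition BC_graph :: "'a set \<Rightarrow> 'a list \<Rightarrow> 'a set \<Rightarrow> ('a \<times> 'a) set \<Rightarrow> ('a \<times> 'a \<Rightarrow> 'a \<times> 'a) \<Rightarrow> bool" where
  "BC_graph B cs V E rot \<longleftrightarrow>
     distinct cs \<and> length cs \<ge> 3 \<and> finite B \<and> B \<inter> set cs = {} \<and>
     plane_graph V E rot \<and>
     V = B \<union> set cs \<and>
     (\<forall>u\<in>set cs. \<forall>v\<in>set cs. (u, v) \<in> E \<longleftrightarrow> cycle_edge cs u v) \<and>
     (\<forall>u\<in>B. \<forall>v\<in>B. (u, v) \<notin> E) \<and>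
     (\<forall>b\<in>B. card {w. (b, w) \<in> E} = 3)"

definition minor_face :: "'a set \<Rightarrow> ('a \<times> 'a) set \<Rightarrow> bool" where
  "minor_face B f \<longleftrightarrow> card {v\<in>B. face_incident f v} \<le> 1"

definition num_minor_faces :: "'a set \<Rightarrow> ('a \<times> 'a) set \<Rightarrow> ('a \<times> 'a \<Rightarrow> 'a \<times> 'a) \<Rightarrow> nat" where
  "num_minor_faces B E rot = card {f \<in> faces E rot. minor_face B f}"

end

theory Submission
  imports Defs "HOL-Combinatorics.Permutations"
begin

text \<open>Euler's formula, with three darts at each outer vertex and the cycle edges, gives
  at least \<open>2|B| + 2\<close> faces. Charge each face with the number of outer vertices on it: the
  three darts leaving an outer vertex lie in at most three faces, so the total charge is at
  most \<open>3|B|\<close>, while every major face is charged at least 2. A face charged 0 uses only cycle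
  edges and never turns back, so it runs around \<open>C\<close> in one of the two directions; there are
  at most two such faces. Hence \<open>2|F| \<le> \<mu>(H) + 3|B| + 2\<close>, i.e. \<open>\<mu>(H) \<ge> |B| + 2\<close>.\<close>

lemma bij_betw_funpow_period:
  assumes "finite S" "bij_betw g S S" "x \<in> S"
  obtains n where "n > 0" "(g ^^ n) x = x"
proof -
  define p where "p y = (if y \<in> S then g y else y)" for y
  have "bij_betw p S S"
    using assms(2) by (rule bij_betw_cong[THEN iffD1, rotated]) (simp add: p_def)
  then have "p permutes S"
    by (rule bij_imp_permutes) (simp add: p_def)
  then have "permutation p"
    by (rule permutes_imp_permutation[OF assms(1)])
  then obtain n where "n > 0" "(p ^^ n) x = x"
    by (rule permutation_self)
  moreover have "(p ^^ k) x = (g ^^ k) x" for k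
    by (induction k) (use assms(3) bij_betwE[OF bij_betw_funpow[OF assms(2)]] in \<open>auto simp: p_def\<close>)
  ultimately show thesis using that by simp
qed

lemma bij_betw_face_perm:
  assumes "simple_graph V E" "rotation_system E rot"
  shows "bij_betw (face_perm rot) E E"
proof -
  have "prod.swap ` E = E"
    using assms(1) unfolding simple_graph_def sym_def by force
  then have "bij_betw prod.swap E E"
    by (simp add: bij_betw_def)
  moreover have "face_perm rot = rot \<circ> prod.swap"
    by (auto simp: face_perm_def fun_eq_iff)
  ultimately show ?thesis
    using assms(2) unfolding rotation_system_def by (metis bij_betw_trans)
qed

lemma fst_face_perm:
  assumes "rotation_system E rot" "(y, x) \<in> E"
  shows "fst (face_perm rot (x, y)) = y"
  using assms unfolding rotation_system_def face_perm_def by simp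

lemma rot_neq_self:
  assumes "rotation_system E rot" "(y, x) \<in> E" "(y, z) \<in> E" "z \<noteq> x"
  shows "rot (y, x) \<noteq> (y, x)"
proof
  assume "rot (y, x) = (y, x)"
  then have "(rot ^^ n) (y, x) = (y, x)" for n
    by (induction n) simp_all
  moreover obtain n where "(rot ^^ n) (y, x) = (y, z)"
    using assms(1-3) unfolding rotation_system_def by fastforce
  ultimately show False
    using assms(4) by simp
qed

lemma self_in_face_of: "d \<in> face_of rot d"
  unfolding face_of_def by (auto intro: exI[of _ 0])

lemma face_perm_in_face_of: "x \<in> face_of rot d \<Longrightarrow> face_perm rot x \<in> face_of rot d"
  unfolding face_of_def by (auto intro: exI[of _ "Suc n" for n])

lemma face_perm_in_faces: "f \<in> faces E rot \<Longrightarrow> d \<in> f \<Longrightarrow> face_perm rot d \<in> f"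
  unfolding faces_def using face_perm_in_face_of by blast

lemma face_of_subset:
  assumes "bij_betw (face_perm rot) E E" "d \<in> E"
  shows "face_of rot d \<subseteq> E"
  unfolding face_of_def using assms(2) bij_betwE[OF bij_betw_funpow[OF assms(1)]] by auto

lemma faces_subset: "bij_betw (face_perm rot) E E \<Longrightarrow> f \<in> faces E rot \<Longrightarrow> f \<subseteq> E"
  unfolding faces_def using face_of_subset by blast

lemma face_of_eq:
  assumes "finite E" "bij_betw (face_perm rot) E E" "d \<in> E" "x \<in> face_of rot d"
  shows "face_of rot x = face_of rot d"
proof -
  let ?g = "face_perm rot"
  obtain m where x: "x = (?g ^^ m) d"
    using assms(4) unfolding face_of_def by auto
  obtain p where p: "p > 0" "(?g ^^ p) d = d"
    using bij_betw_funpow_period[OF assms(1-3)] .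
  have x_from_d: "(?g ^^ n) x = (?g ^^ (n + m)) d" for n
    by (simp add: x funpow_add)
  have d_from_x: "(?g ^^ n) d = (?g ^^ (n + (p - 1) * m)) x" for n
  proof -
    have "n + (p - 1) * m + m = n + m * p"
      using p(1) by (cases p) (simp_all add: algebra_simps)
    then have "(?g ^^ (n + (p - 1) * m)) x = (?g ^^ (n + m * p)) d"
      by (simp only: x_from_d)
    also have "\<dots> = (?g ^^ n) d"
      using funpow_mod_eq[OF p(2), of "n + m * p"] funpow_mod_eq[OF p(2), of n] by simp
    finally show ?thesis ..
  qed
  have "(?g ^^ n) x \<in> face_of rot d" "(?g ^^ n) d \<in> face_of rot x" for n
    unfolding face_of_def x_from_d[of n] d_from_x[of n] by blast+
  then show ?thesis
    unfolding face_of_def by blast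
qed

lemma faces_disjoint:
  assumes "finite E" "bij_betw (face_perm rot) E E"
    and "f \<in> faces E rot" "f' \<in> faces E rot" "f \<noteq> f'"
  shows "f \<inter> f' = {}"
proof -
  obtain d d' where "d \<in> E" "f = face_of rot d" "d' \<in> E" "f' = face_of rot d'"
    using assms(3,4) unfolding faces_def by blast
  then show ?thesis
    using assms(5) face_of_eq[OF assms(1,2)] by blast
qed

lemma card_eq_sum_card_Int_faces:
  assumes "finite E" "bij_betw (face_perm rot) E E" "D \<subseteq> E"
  shows "card D = (\<Sum>f\<in>faces E rot. card (f \<inter> D))"
proof -
  have "D = (\<Union>f\<in>faces E rot. f \<inter> D)"
    using assms(3) self_in_face_of unfolding faces_def by fast
  also have "card \<dots> = (\<Sum>f\<in>faces E rot. card (f \<inter> D))"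
    using assms(1) finite_subset[OF assms(3,1)] faces_disjoint[OF assms(1,2)]
    by (intro card_UN_disjoint) (auto simp: faces_def)
  finally show ?thesis .
qed

lemma card_incident_le_card_Int_darts:
  assumes "finite E" "f \<subseteq> E"
  shows "card {v \<in> B. face_incident f v} \<le> card (f \<inter> {d \<in> E. fst d \<in> B})"
proof -
  have "{v \<in> B. face_incident f v} = fst ` (f \<inter> {d \<in> E. fst d \<in> B})"
    using assms(2) unfolding face_incident_def by auto
  then show ?thesis
    using assms(1) by (simp add: card_image_le)
qed

lemma two_card_faces_le:
  assumes "finite E" "bij_betw (face_perm rot) E E" "finite B"
  shows "2 * card (faces E rot) \<le> num_minor_faces B E rot + card {d \<in> E. fst d \<in> B}
           + card {f \<in> faces E rot. \<forall>v\<in>B. \<not> face_incident f v}"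
proof -
  let ?F = "faces E rot" and ?D = "{d \<in> E. fst d \<in> B}"
  define w where "w f = card {v \<in> B. face_incident f v}" for f
  have finF: "finite ?F"
    using assms(1) unfolding faces_def by simp
  have "2 \<le> of_bool (minor_face B f) + w f + of_bool (\<forall>v\<in>B. \<not> face_incident f v)" for f
  proof -
    have "(\<forall>v\<in>B. \<not> face_incident f v) \<longleftrightarrow> w f = 0"
      using assms(3) unfolding w_def by auto
    then show ?thesis
      unfolding minor_face_def w_def[symmetric] by auto
  qed
  then have "(\<Sum>f\<in>?F. 2) \<le> (\<Sum>f\<in>?F. of_bool (minor_face B f) + w f + of_bool (\<forall>v\<in>B. \<not> face_incident f v))"
    by (rule sum_mono)
  also have "\<dots> = num_minor_faces B E rot + (\<Sum>f\<in>?F. w f) + card {f \<in> ?F. \<forall>v\<in>B. \<not> face_incident f v}"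
    using finF by (simp add: sum.distrib num_minor_faces_def Collect_conj_eq Int_commute)
  also have "(\<Sum>f\<in>?F. w f) \<le> (\<Sum>f\<in>?F. card (f \<inter> ?D))"
    using assms(1) faces_subset[OF assms(2)] unfolding w_def
    by (intro sum_mono card_incident_le_card_Int_darts) auto
  also have "\<dots> = card ?D"
    using card_eq_sum_card_Int_faces[OF assms(1,2), of ?D] by simp
  finally show ?thesis
    by simp
qed

lemma Suc_mod_pred_mod: "j < n \<Longrightarrow> Suc ((j + n - 1) mod n) mod n = j"
  by (cases j) (auto simp: mod_Suc)

lemma pred_mod_Suc_mod: "j < n \<Longrightarrow> (Suc j mod n + n - 1) mod n = (j::nat)"
  by (cases "Suc j < n") (auto simp: mod_Suc)

lemma Suc_mod_neq_pred_mod: "3 \<le> n \<Longrightarrow> j < n \<Longrightarrow> Suc j mod n \<noteq> (j + n - 1) mod n"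
  by (cases j; cases "Suc j < n") (auto simp: mod_Suc)

lemma Suc_mod_closed_zero:
  assumes "j < n" "P j" "\<And>i. i < n \<Longrightarrow> P i \<Longrightarrow> P (Suc i mod n)"
  shows "P 0"
proof -
  have "P ((j + k) mod n)" for k
  proof (induction k)
    case 0
    then show ?case using assms(1,2) by simp
  next
    case (Suc k)
    then have "P (Suc ((j + k) mod n) mod n)"
      using assms(1,3) by simp
    then show ?case
      by (simp add: mod_Suc_eq)
  qed
  from this[of "n - j"] show ?thesis
    using assms(1) by simp
qed

lemma pred_mod_closed_zero:
  fixes n :: nat
  assumes "j < n" "P j" "\<And>i. i < n \<Longrightarrow> P i \<Longrightarrow> P ((i + n - 1) mod n)"
  shows "P 0"
proof -
  have "P (j - k)" if "k \<le> j" for k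
    using that
  proof (induction k)
    case 0
    then show ?case using assms(2) by simp
  next
    case (Suc k)
    have "j - k + n - 1 = (j - Suc k) + n"
      using Suc.prems by simp
    then have "(j - k + n - 1) mod n = j - Suc k"
      using assms(1) by (simp only: mod_add_self2) simp
    then show ?case
      using Suc assms(1) assms(3)[of "j - k"] by simp
  qed
  from this[of j] show ?thesis
    by simp
qed

lemma cycle_edge_nth_iff:
  assumes "distinct cs" "j < length cs"
  shows "cycle_edge cs (cs ! j) w \<longleftrightarrow>
           w = cs ! (Suc j mod length cs) \<or> w = cs ! ((j + length cs - 1) mod length cs)"
proof -
  let ?n = "length cs" and ?p = "(j + length cs - 1) mod length cs"
  have p: "?p < ?n" "Suc ?p mod ?n = j"
    using assms(2) Suc_mod_pred_mod[of j ?n] by (auto intro!: mod_less_divisor)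
  have "cs ! j = cs ! (Suc i mod ?n) \<longleftrightarrow> i = ?p" if "i < ?n" for i
  proof -
    have "Suc i mod ?n < ?n"
      using that by (intro mod_less_divisor) linarith
    then have "cs ! j = cs ! (Suc i mod ?n) \<longleftrightarrow> j = Suc i mod ?n"
      by (rule nth_eq_iff_index_eq[OF assms])
    then show ?thesis
      using that p(2) pred_mod_Suc_mod[of i ?n] by auto
  qed
  then show ?thesis
    using assms p unfolding cycle_edge_def by (auto simp: nth_eq_iff_index_eq)
qed

lemma cycle_edge_in_set: "cycle_edge cs u v \<Longrightarrow> u \<in> set cs \<and> v \<in> set cs"
  unfolding cycle_edge_def by (auto intro!: nth_mem mod_less_divisor)

lemma card_cycle_neighbours:
  assumes "distinct cs" "3 \<le> length cs" "c \<in> set cs"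
  shows "card {w. cycle_edge cs c w} = 2"
proof -
  let ?n = "length cs"
  obtain j where j: "j < ?n" "c = cs ! j"
    using assms(3) by (auto simp: in_set_conv_nth)
  then have "{w. cycle_edge cs c w} = {cs ! (Suc j mod ?n), cs ! ((j + ?n - 1) mod ?n)}"
    using cycle_edge_nth_iff[OF assms(1)] by auto
  moreover have "cs ! (Suc j mod ?n) \<noteq> cs ! ((j + ?n - 1) mod ?n)"
    using j(1) assms(2) Suc_mod_neq_pred_mod[of ?n j]
    by (subst nth_eq_iff_index_eq[OF assms(1)]) (auto intro!: mod_less_divisor)
  ultimately show ?thesis
    by simp
qed

locale bc_graph =
  fixes B :: "'a set" and cs :: "'a list" and V :: "'a set"
    and E :: "('a \<times> 'a) set" and rot :: "'a \<times> 'a \<Rightarrow> 'a \<times> 'a"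
  assumes BC_graph: "BC_graph B cs V E rot"
begin

lemma
  shows distinct_cs: "distinct cs"
    and length_cs_ge: "3 \<le> length cs"
    and finite_B: "finite B"
    and B_disjoint: "B \<inter> set cs = {}"
    and simple_graph: "simple_graph V E"
    and rotation_system: "rotation_system E rot"
    and euler: "2 * (card V + card (faces E rot)) = card E + 4"
    and V_eq: "V = B \<union> set cs"
    and cycle_induced: "\<And>u v. u \<in> set cs \<Longrightarrow> v \<in> set cs \<Longrightarrow> (u, v) \<in> E \<longleftrightarrow> cycle_edge cs u v"
    and B_independent: "\<And>u v. u \<in> B \<Longrightarrow> v \<in> B \<Longrightarrow> (u, v) \<notin> E"
    and degree_B: "\<And>b. b \<in> B \<Longrightarrow> card {w. (b, w) \<in> E} = 3"
  using BC_graph unfolding BC_graph_def plane_graph_def by auto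

lemma
  shows finite_V: "finite V"
    and E_subset: "E \<subseteq> V \<times> V"
    and E_sym: "(u, v) \<in> E \<Longrightarrow> (v, u) \<in> E"
  using simple_graph unfolding simple_graph_def sym_def by auto

lemma finite_E: "finite E"
  using finite_V E_subset finite_subset by blast

lemmas bij_face_perm = bij_betw_face_perm[OF simple_graph rotation_system]

lemma card_darts_from_B: "card {d \<in> E. fst d \<in> B} = 3 * card B"
proof -
  have "{d \<in> E. fst d \<in> B} = Sigma B (\<lambda>b. {w. (b, w) \<in> E})"
    by auto
  moreover have "finite {w. (b, w) \<in> E}" for b
    using finite_V E_subset by (auto intro: finite_subset)
  ultimately show ?thesis
    using finite_B degree_B by simp
qed

lemma card_cycle_darts: "card (E \<inter> set cs \<times> set cs) = 2 * length cs"
proof -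
  have "E \<inter> set cs \<times> set cs = Sigma (set cs) (\<lambda>c. {w. cycle_edge cs c w})"
    by (auto simp: cycle_induced dest: cycle_edge_in_set)
      (metis cycle_edge_in_set cycle_induced)
  moreover have "finite {w. cycle_edge cs c w}" for c
    by (rule finite_subset[of _ "set cs"]) (auto dest: cycle_edge_in_set)
  ultimately show ?thesis
    using card_cycle_neighbours[OF distinct_cs length_cs_ge]
    by (simp add: distinct_card[OF distinct_cs])
qed

lemma card_darts_ge: "6 * card B + 2 * length cs \<le> card E"
proof -
  let ?D = "{d \<in> E. fst d \<in> B}" and ?C = "E \<inter> set cs \<times> set cs"
  have "?D \<inter> ?D\<inverse> = {}"
    using B_independent by auto
  moreover have "(?D \<union> ?D\<inverse>) \<inter> ?C = {}"
    using B_disjoint by auto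
  ultimately have "card (?D \<union> ?D\<inverse> \<union> ?C) = card ?D + card (?D\<inverse>) + card ?C"
    using finite_E by (simp add: card_Un_disjoint)
  also have "\<dots> = 6 * card B + 2 * length cs"
    using card_darts_from_B card_cycle_darts by simp
  finally show ?thesis
    using E_sym card_mono[OF finite_E, of "?D \<union> ?D\<inverse> \<union> ?C"] by auto
qed

lemma card_V: "card V = card B + length cs"
  using V_eq B_disjoint finite_B distinct_card[OF distinct_cs] by (simp add: card_Un_disjoint)

lemma card_faces_ge: "2 * card B + 2 \<le> card (faces E rot)"
  using euler card_darts_ge card_V by simp

lemma face_avoiding_B_continues:
  assumes f: "f \<in> faces E rot" and avoid: "\<forall>v\<in>B. \<not> face_incident f v" and xy: "(x, y) \<in> f"
  shows "\<exists>w. (y, w) \<in> f \<and> w \<noteq> x \<and> cycle_edge cs y w"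
proof -
  have f_E: "f \<subseteq> E"
    using faces_subset[OF bij_face_perm f] .
  have yx: "(y, x) \<in> E"
    using xy f_E E_sym by blast
  obtain w where rot_yx: "rot (y, x) = (y, w)"
    using rotation_system yx unfolding rotation_system_def by (metis fst_conv prod.collapse)
  have yw: "(y, w) \<in> f"
    using face_perm_in_faces[OF f xy] rot_yx by (simp add: face_perm_def)
  have wy: "(w, y) \<in> E"
    using yw f_E E_sym by blast
  have "fst (face_perm rot (y, w)) = w"
    using fst_face_perm[OF rotation_system wy] .
  then have "y \<notin> B" "w \<notin> B"
    using avoid yw face_perm_in_faces[OF f yw] unfolding face_incident_def by force+
  then have y_cs: "y \<in> set cs" and "w \<in> set cs"
    using wy E_subset V_eq by auto
  then have "cycle_edge cs y w"
    using cycle_induced wy E_sym by blast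
  moreover obtain z where "cycle_edge cs y z" "z \<noteq> x"
    using card_cycle_neighbours[OF distinct_cs length_cs_ge y_cs] by (metis card_2_iff' mem_Collect_eq)
  then have "rot (y, x) \<noteq> (y, x)"
    using rot_neq_self[OF rotation_system yx] cycle_induced y_cs cycle_edge_in_set by metis
  ultimately show ?thesis
    using yw rot_yx by auto
qed

abbreviation nxt :: "nat \<Rightarrow> nat" where "nxt i \<equiv> Suc i mod length cs"

abbreviation prv :: "nat \<Rightarrow> nat" where "prv i \<equiv> (i + length cs - 1) mod length cs"

lemma face_avoiding_B_forward:
  assumes "f \<in> faces E rot" "\<forall>v\<in>B. \<not> face_incident f v" "j < length cs"
    and "(cs ! j, cs ! nxt j) \<in> f"
  shows "(cs ! nxt j, cs ! nxt (nxt j)) \<in> f"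
proof -
  obtain w where "(cs ! nxt j, w) \<in> f" "w \<noteq> cs ! j" "cycle_edge cs (cs ! nxt j) w"
    using face_avoiding_B_continues[OF assms(1,2,4)] by blast
  moreover have "nxt j < length cs" "prv (nxt j) = j"
    using assms(3) pred_mod_Suc_mod[of j "length cs"] by (auto intro!: mod_less_divisor)
  ultimately show ?thesis
    using cycle_edge_nth_iff[OF distinct_cs] by metis
qed

lemma face_avoiding_B_backward:
  assumes "f \<in> faces E rot" "\<forall>v\<in>B. \<not> face_incident f v" "j < length cs"
    and "(cs ! nxt j, cs ! j) \<in> f"
  shows "(cs ! nxt (prv j), cs ! prv j) \<in> f"
proof -
  obtain w where "(cs ! j, w) \<in> f" "w \<noteq> cs ! nxt j" "cycle_edge cs (cs ! j) w"
    using face_avoiding_B_continues[OF assms(1,2,4)] by blast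
  then show ?thesis
    using assms(3) cycle_edge_nth_iff[OF distinct_cs] Suc_mod_pred_mod by metis
qed

lemma faces_avoiding_B:
  "{f \<in> faces E rot. \<forall>v\<in>B. \<not> face_incident f v} \<subseteq> {face_of rot (cs ! 0, cs ! 1), face_of rot (cs ! 1, cs ! 0)}"
proof
  fix f
  assume "f \<in> {f \<in> faces E rot. \<forall>v\<in>B. \<not> face_incident f v}"
  then have f: "f \<in> faces E rot" and avoid: "\<forall>v\<in>B. \<not> face_incident f v"
    by auto
  obtain d where d: "d \<in> E" "f = face_of rot d"
    using f unfolding faces_def by auto
  obtain y w where "(y, w) \<in> f" "cycle_edge cs y w"
    using face_avoiding_B_continues[OF f avoid, of "fst d" "snd d"] d self_in_face_of by fastforce
  then obtain j where j: "j < length cs"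
    and "(cs ! j, cs ! nxt j) \<in> f \<or> (cs ! nxt j, cs ! j) \<in> f"
    unfolding cycle_edge_def by auto
  then consider "(cs ! j, cs ! nxt j) \<in> f" | "(cs ! nxt j, cs ! j) \<in> f"
    by blast
  then have "(cs ! 0, cs ! nxt 0) \<in> f \<or> (cs ! nxt 0, cs ! 0) \<in> f"
  proof cases
    case 1
    then show ?thesis
      using Suc_mod_closed_zero[of j "length cs" "\<lambda>i. (cs ! i, cs ! nxt i) \<in> f"]
        face_avoiding_B_forward[OF f avoid] j by blast
  next
    case 2
    then show ?thesis
      using pred_mod_closed_zero[of j "length cs" "\<lambda>i. (cs ! nxt i, cs ! i) \<in> f"]
        face_avoiding_B_backward[OF f avoid] j by blast
  qed
  moreover have "nxt 0 = 1"
    using length_cs_ge by simp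
  moreover have "face_of rot e = f" if "e \<in> f" for e
    using face_of_eq[OF finite_E bij_face_perm d(1)] that d(2) by simp
  ultimately show "f \<in> {face_of rot (cs ! 0, cs ! 1), face_of rot (cs ! 1, cs ! 0)}"
    by auto
qed

lemma card_faces_avoiding_B: "card {f \<in> faces E rot. \<forall>v\<in>B. \<not> face_incident f v} \<le> 2"
proof -
  have "card {face_of rot (cs ! 0, cs ! 1), face_of rot (cs ! 1, cs ! 0)} \<le> 2"
    by (simp add: card_insert_if)
  then show ?thesis
    using card_mono[OF _ faces_avoiding_B] by (meson finite.emptyI finite.insertI le_trans)
qed

end

theorem mainTheorem2:
  fixes B :: "'a set" and cs :: "'a list" and V :: "'a set"
    and E :: "('a \<times> 'a) set" and rot :: "'a \<times> 'a \<Rightarrow> 'a \<times> 'a"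
  assumes "BC_graph B cs V E rot"
  shows "num_minor_faces B E rot \<ge> card V - card (set cs) + 2"
proof -
  interpret bc_graph B cs V E rot
    using assms by unfold_locales
  have "2 * card (faces E rot) \<le> num_minor_faces B E rot + card {d \<in> E. fst d \<in> B}
          + card {f \<in> faces E rot. \<forall>v\<in>B. \<not> face_incident f v}"
    by (rule two_card_faces_le[OF finite_E bij_face_perm finite_B])
  moreover have "card V - card (set cs) = card B"
    using card_V distinct_card[OF distinct_cs] by simp
  ultimately show ?thesis
    using card_darts_from_B card_faces_avoiding_B card_faces_ge by linarith
qed

end
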